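(* Let $s>0$, $k>0$, and let $\theta(t)$, $t\ge0$, be differentiable and satisfy $$\frac{d}{dt}\cos s\theta\ge k(1-\cos^2s\theta),$$ with $\cos s\theta_0\ge1/2$. Then $\cos s\theta_t\ge\tanh(kt)$ for all $t\ge0$, and hence, for $c<1$, if $T=\inf\{t\ge0:\cos s\theta_t\ge c\}$ then $T\le\frac1{2k}\log\frac{2}{1-c}$. *)

theory Defs
  imports "HOL-Analysis.Analysis"
begin

end

theory Submission
  imports Defs
begin

text \<open>The function \<open>y = cos (s \<theta>)\<close> is a supersolution of the Riccati equation
  \<open>y' = k (1 - y\<^sup>2)\<close>, whose solution starting at \<open>0\<close> is \<open>tanh (k t)\<close>.  The comparison is made
  through the quantity \<open>(1 - y) / (1 + y) \<cdot> exp (2 k t)\<close>, which is constant along solutions and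
  nonincreasing along supersolutions; since \<open>(1 - tanh x) / (1 + tanh x) = exp (-2 x)\<close> this gives
  \<open>y t \<ge> tanh (k t)\<close>.  At \<open>T = ln (2 / (1 - c)) / (2 k)\<close> one has
  \<open>tanh (k T) = (1 + c) / (3 - c) \<ge> c\<close>, which bounds the hitting time of level \<open>c\<close>.\<close>

lemma DERIV_within_atLeast_nonneg_imp_increasing:
  fixes f f' :: "real \<Rightarrow> real"
  assumes deriv: "\<And>x. a \<le> x \<Longrightarrow> (f has_real_derivative f' x) (at x within {a..})"
    and nonneg: "\<And>x. a \<le> x \<Longrightarrow> 0 \<le> f' x"
    and "a \<le> b"
  shows "f a \<le> f b"
proof (rule DERIV_nonneg_imp_increasing_open[OF \<open>a \<le> b\<close>])
  fix x assume "a < x" "x < b"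
  then have "at x within {a..} = at x"
    by (intro at_within_interior) simp
  then show "\<exists>y. (f has_real_derivative y) (at x) \<and> 0 \<le> y"
    using deriv nonneg \<open>a < x\<close> by (metis less_imp_le)
next
  have "continuous_on {a..} f"
    unfolding continuous_on_eq_continuous_within
    using deriv DERIV_continuous by (metis atLeast_iff)
  then show "continuous_on {a..b} f"
    by (rule continuous_on_subset) auto
qed

lemma DERIV_within_atLeast_nonpos_imp_decreasing:
  fixes f f' :: "real \<Rightarrow> real"
  assumes "\<And>x. a \<le> x \<Longrightarrow> (f has_real_derivative f' x) (at x within {a..})"
    and "\<And>x. a \<le> x \<Longrightarrow> f' x \<le> 0"
    and "a \<le> b"
  shows "f b \<le> f a"
  using DERIV_within_atLeast_nonneg_imp_increasing[of a "\<lambda>x. - f x" "\<lambda>x. - f' x" b] assms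
  by (simp add: DERIV_minus)

lemma tanh_le_if_ratio_le_exp:
  fixes x y :: real
  assumes "-1 < y" and "(1 - y) / (1 + y) \<le> exp (- 2 * x)"
  shows "tanh x \<le> y"
proof -
  have "1 - y \<le> exp (- 2 * x) * (1 + y)"
    using assms by (simp add: divide_le_eq)
  then have "1 - exp (- 2 * x) \<le> y * (1 + exp (- 2 * x))"
    by (simp add: algebra_simps)
  then show ?thesis
    unfolding tanh_real_altdef by (simp add: divide_le_eq add_pos_pos)
qed

lemma tanh_le_of_riccati_supersolution:
  fixes y D :: "real \<Rightarrow> real" and k t :: real
  assumes "0 \<le> k"
    and deriv: "\<And>t. 0 \<le> t \<Longrightarrow> (y has_real_derivative D t) (at t within {0..})"
    and riccati: "\<And>t. 0 \<le> t \<Longrightarrow> k * (1 - (y t)\<^sup>2) \<le> D t"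
    and bounded: "\<And>t. 0 \<le> t \<Longrightarrow> \<bar>y t\<bar> \<le> 1"
    and "0 \<le> y 0" and "0 \<le> t"
  shows "tanh (k * t) \<le> y t"
proof -
  have y_ge_y0: "y 0 \<le> y u" if "0 \<le> u" for u
  proof (rule DERIV_within_atLeast_nonneg_imp_increasing[OF deriv _ that])
    fix x :: real assume "0 \<le> x"
    with bounded have "(y x)\<^sup>2 \<le> 1"
      by (simp add: abs_square_le_1)
    with riccati[OF \<open>0 \<le> x\<close>] \<open>0 \<le> k\<close> show "0 \<le> D x"
      by (smt (verit) mult_nonneg_nonneg)
  qed simp
  have y_pos: "0 < 1 + y u" if "0 \<le> u" for u
    using y_ge_y0[OF that] \<open>0 \<le> y 0\<close> by simp
  define q where "q u = (1 - y u) * exp (2 * k * u) / (1 + y u)" for u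
  have "q t \<le> q 0"
  proof (rule DERIV_within_atLeast_nonpos_imp_decreasing[OF _ _ \<open>0 \<le> t\<close>])
    fix u :: real assume "0 \<le> u"
    have "(q has_real_derivative
        ((- D u * exp (2 * k * u) + (1 - y u) * (exp (2 * k * u) * (2 * k))) * (1 + y u)
          - (1 - y u) * exp (2 * k * u) * D u) / ((1 + y u) * (1 + y u))) (at u within {0..})"
      unfolding q_def using y_pos[OF \<open>0 \<le> u\<close>]
      by (auto intro!: derivative_eq_intros deriv \<open>0 \<le> u\<close>)
    also have "((- D u * exp (2 * k * u) + (1 - y u) * (exp (2 * k * u) * (2 * k))) * (1 + y u)
          - (1 - y u) * exp (2 * k * u) * D u) / ((1 + y u) * (1 + y u))
        = 2 * exp (2 * k * u) * (k * (1 - (y u)\<^sup>2) - D u) / (1 + y u)\<^sup>2"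
      by (simp add: algebra_simps power2_eq_square)
    finally show "(q has_real_derivative
        2 * exp (2 * k * u) * (k * (1 - (y u)\<^sup>2) - D u) / (1 + y u)\<^sup>2) (at u within {0..})" .
    show "2 * exp (2 * k * u) * (k * (1 - (y u)\<^sup>2) - D u) / (1 + y u)\<^sup>2 \<le> 0"
      using riccati[OF \<open>0 \<le> u\<close>] by (simp add: divide_nonpos_nonneg mult_nonneg_nonpos)
  qed
  also have "q 0 \<le> 1"
    unfolding q_def using \<open>0 \<le> y 0\<close> by (simp add: field_simps)
  finally have "(1 - y t) * exp (2 * k * t) \<le> 1 + y t"
    unfolding q_def using y_pos[OF \<open>0 \<le> t\<close>] by (simp add: divide_le_eq)
  then have "(1 - y t) / (1 + y t) \<le> exp (- 2 * (k * t))"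
    using y_pos[OF \<open>0 \<le> t\<close>] by (simp add: divide_le_eq exp_minus field_simps)
  then show ?thesis
    using y_pos[OF \<open>0 \<le> t\<close>] by (intro tanh_le_if_ratio_le_exp) simp_all
qed

lemma tanh_half_ln:
  fixes x :: real
  assumes "0 < x"
  shows "tanh (ln x / 2) = (x - 1) / (x + 1)"
proof -
  have "tanh (ln x / 2) = (1 - 1 / x) / (1 + 1 / x)"
    using assms by (simp add: tanh_real_altdef exp_minus inverse_eq_divide)
  also have "\<dots> = (x - 1) / (x + 1)"
    using assms by (simp add: divide_simps)
  finally show ?thesis .
qed

lemma le_tanh_half_ln_two_div:
  fixes c :: real
  assumes "c < 1"
  shows "c \<le> tanh (ln (2 / (1 - c)) / 2)"
proof -
  have "2 / (1 - c) - 1 = (1 + c) / (1 - c)" and "2 / (1 - c) + 1 = (3 - c) / (1 - c)"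
    using assms by (simp_all add: field_simps)
  then have "tanh (ln (2 / (1 - c)) / 2) = (1 + c) / (3 - c)"
    using assms by (simp add: tanh_half_ln)
  moreover have "c * (3 - c) \<le> 1 + c"
    using zero_le_power2[of "1 - c"] by (simp add: power2_eq_square algebra_simps)
  ultimately show ?thesis
    using assms by (simp add: le_divide_eq)
qed

lemma hitting_time_le_of_tanh_le:
  fixes y :: "real \<Rightarrow> real" and k c :: real
  assumes "0 < k"
    and tanh_le: "\<And>t. 0 \<le> t \<Longrightarrow> tanh (k * t) \<le> y t"
    and "-1 \<le> c" and "c < 1"
  shows "Inf {t. 0 \<le> t \<and> c \<le> y t} \<le> ln (2 / (1 - c)) / (2 * k)"
proof (rule cInf_lower)
  define T where "T = ln (2 / (1 - c)) / (2 * k)"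
  have "0 \<le> T"
    unfolding T_def using assms by (simp add: field_simps)
  moreover have "tanh (k * T) = tanh (ln (2 / (1 - c)) / 2)"
    unfolding T_def using \<open>0 < k\<close> by simp
  then have "c \<le> y T"
    using le_tanh_half_ln_two_div[OF \<open>c < 1\<close>] tanh_le[OF \<open>0 \<le> T\<close>] by linarith
  ultimately show "ln (2 / (1 - c)) / (2 * k) \<in> {t. 0 \<le> t \<and> c \<le> y t}"
    unfolding T_def by simp
qed (rule bdd_belowI[of _ 0], simp)

theorem lemmaH1:
  fixes s k :: real and \<theta> D :: "real \<Rightarrow> real"
  assumes "s > 0" and "k > 0"
    and "\<forall>t\<ge>0. \<theta> differentiable (at t within {0..})"
    and "\<forall>t\<ge>0. ((\<lambda>u. cos (s * \<theta> u)) has_real_derivative D t) (at t within {0..})"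
    and "\<forall>t\<ge>0. D t \<ge> k * (1 - (cos (s * \<theta> t))\<^sup>2)"
    and "cos (s * \<theta> 0) \<ge> 1/2"
  shows "(\<forall>t\<ge>0. cos (s * \<theta> t) \<ge> tanh (k * t)) \<and>
         (\<forall>c::real. -1 \<le> c \<and> c < 1 \<longrightarrow>
            Inf {t. t \<ge> 0 \<and> cos (s * \<theta> t) \<ge> c} \<le> ln (2 / (1 - c)) / (2 * k))"
proof -
  \<comment> \<open>Only \<open>cos (s \<theta> 0) \<ge> 0\<close> is needed.\<close>
  have tanh_le: "tanh (k * t) \<le> cos (s * \<theta> t)" if "0 \<le> t" for t
    using assms(2,4-6) that
    by (intro tanh_le_of_riccati_supersolution[where D = D]) auto
  then show ?thesis
    using hitting_time_le_of_tanh_le[OF \<open>k > 0\<close>] by auto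
qed

end
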